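(* Let $\Theta=\{1,2\}$, let $P_1,\dots,P_m$ be experiments, and let $(A,u)$ be a decision problem equivalent to $\bigoplus_{\ell=1}^k(A_\ell,u_\ell)$ for some decision problems $(A_1,u_1),\dots,(A_k,u_k)$. Let $\sigma:\mathbf Y\to\Delta(A_1\times\cdots\times A_k)$ be robustly optimal for $\bigoplus_{\ell=1}^k(A_\ell,u_\ell)$, and let $\sigma_\ell(\mathbf y)\in\Delta(A_\ell)$ denote the marginal of $\sigma(\mathbf y)$ on $A_\ell$. Then there exists $\sigma^*:\mathbf Y\to\Delta(A)$ such that $$u(\sigma^*(\mathbf y))\ge\sum_{\ell=1}^k u_\ell(\sigma_\ell(\mathbf y))\quad\text{for all }\mathbf y\in\mathbf Y,$$ and every $\sigma^*$ with this property is robustly optimal for $(A,u)$.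
   Context: $\Theta$ is a finite set of states. A decision problem is a pair $(A,u)$ with $A$ a finite nonempty action set and $u:\Theta\times A\to\mathbb{R}$; for $\alpha\in\Delta(A)$ write $u(\theta,\alpha)=\sum_a\alpha(a)u(\theta,a)$ and $u(\alpha)=(u(\theta,\alpha))_{\theta\in\Theta}\in\mathbb{R}^\Theta$; inequalities between vectors are componentwise. An experiment is a map $P:\Theta\to\Delta(Y)$ with $Y$ a finite signal set. Given experiments $P_j:\Theta\to\Delta(Y_j)$, $j=1,\dots,m$, let $\mathbf Y=Y_1\times\cdots\times Y_m$ and let $\mathcal P(P_1,\dots,P_m)$ be the set of experiments $P:\Theta\to\Delta(\mathbf Y)$ whose $j$-th marginal is $P_j(\cdot|\theta)$ for every $\theta$ and $j$. A strategy is a map $\sigma:\mathbf Y\to\Delta(A)$. Define $V(P_1,\dots,P_m;(A,u))=\max_{\sigma}\min_{P\in\mathcal P(P_1,\dots,P_m)}\sum_{\theta}\sum_{\mathbf y\in\mathbf Y}P(\mathbf y|\theta)u(\theta,\sigma(\mathbf y))$, and call a maximizing $\sigma$ robustly optimal for $(A,u)$. The composition $\bigoplus_{\ell=1}^k(A_\ell,u_\ell)$ is the decision problem with action set $A_1\times\cdots\times A_k$ and utility $u(\theta,(a_1,\dots,a_k))=\sum_{\ell}u_\ell(\theta,a_\ell)$. For a decision problem let $\mathcal H(A,u)=\mathrm{co}\{u(\cdot,a):a\in A\}-\mathbb{R}_+^{\Theta}$ (Minkowski difference). Two decision problems $(A,u)$, $(A',u')$ are equivalent if $\mathcal H(A,u)=\mathcal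 H(A',u')$. *)

theory Defs
  imports "HOL-Analysis.Analysis"
begin

(* States: a finite type 's (the theorem assumes CARD('s) = 2, i.e. Theta = {1,2}). *)

definition dist_on :: "'a set \<Rightarrow> ('a \<Rightarrow> real) \<Rightarrow> bool" where
  "dist_on S \<alpha> \<longleftrightarrow> (\<forall>x\<in>S. 0 \<le> \<alpha> x) \<and> sum \<alpha> S = 1"

definition sigspace :: "nat \<Rightarrow> (nat \<Rightarrow> 'y set) \<Rightarrow> (nat \<Rightarrow> 'y) set" where
  "sigspace m Y = PiE {..<m} Y"

definition is_experiment :: "'y set \<Rightarrow> ('s \<Rightarrow> 'y \<Rightarrow> real) \<Rightarrow> bool" where
  "is_experiment Y P \<longleftrightarrow> finite Y \<and> (\<forall>\<theta>. dist_on Y (P \<theta>))"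

definition couplings :: "nat \<Rightarrow> (nat \<Rightarrow> 'y set) \<Rightarrow> (nat \<Rightarrow> 's \<Rightarrow> 'y \<Rightarrow> real)
    \<Rightarrow> ('s \<Rightarrow> (nat \<Rightarrow> 'y) \<Rightarrow> real) set" where
  "couplings m Y P = {Q. (\<forall>\<theta>. dist_on (sigspace m Y) (Q \<theta>)) \<and>
      (\<forall>\<theta> j y. j < m \<and> y \<in> Y j \<longrightarrow>
         sum (Q \<theta>) {ys \<in> sigspace m Y. ys j = y} = P j \<theta> y)}"

definition eu :: "'a set \<Rightarrow> ('s \<Rightarrow> 'a \<Rightarrow> real) \<Rightarrow> 's \<Rightarrow> ('a \<Rightarrow> real) \<Rightarrow> real" where
  "eu A u \<theta> \<alpha> = (\<Sum>a\<in>A. \<alpha> a * u \<theta> a)"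

definition strategy :: "'a set \<Rightarrow> (nat \<Rightarrow> 'y) set \<Rightarrow> ((nat \<Rightarrow> 'y) \<Rightarrow> 'a \<Rightarrow> real) \<Rightarrow> bool" where
  "strategy A YY \<sigma> \<longleftrightarrow> (\<forall>ys\<in>YY. dist_on A (\<sigma> ys))"

definition payoff :: "'a set \<Rightarrow> ('s::finite \<Rightarrow> 'a \<Rightarrow> real) \<Rightarrow> (nat \<Rightarrow> 'y) set
    \<Rightarrow> ('s \<Rightarrow> (nat \<Rightarrow> 'y) \<Rightarrow> real) \<Rightarrow> ((nat \<Rightarrow> 'y) \<Rightarrow> 'a \<Rightarrow> real) \<Rightarrow> real" where
  "payoff A u YY Q \<sigma> = (\<Sum>\<theta>\<in>UNIV. \<Sum>ys\<in>YY. Q \<theta> ys * eu A u \<theta> (\<sigma> ys))"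

definition worst :: "'a set \<Rightarrow> ('s::finite \<Rightarrow> 'a \<Rightarrow> real) \<Rightarrow> nat \<Rightarrow> (nat \<Rightarrow> 'y set)
    \<Rightarrow> (nat \<Rightarrow> 's \<Rightarrow> 'y \<Rightarrow> real) \<Rightarrow> ((nat \<Rightarrow> 'y) \<Rightarrow> 'a \<Rightarrow> real) \<Rightarrow> real" where
  "worst A u m Y P \<sigma> = (INF Q \<in> couplings m Y P. payoff A u (sigspace m Y) Q \<sigma>)"

definition robustly_optimal :: "'a set \<Rightarrow> ('s::finite \<Rightarrow> 'a \<Rightarrow> real) \<Rightarrow> nat \<Rightarrow> (nat \<Rightarrow> 'y set)
    \<Rightarrow> (nat \<Rightarrow> 's \<Rightarrow> 'y \<Rightarrow> real) \<Rightarrow> ((nat \<Rightarrow> 'y) \<Rightarrow> 'a \<Rightarrow> real) \<Rightarrow> bool" where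
  "robustly_optimal A u m Y P \<sigma> \<longleftrightarrow> strategy A (sigspace m Y) \<sigma> \<and>
     (\<forall>\<sigma>'. strategy A (sigspace m Y) \<sigma>' \<longrightarrow> worst A u m Y P \<sigma>' \<le> worst A u m Y P \<sigma>)"

definition compA :: "nat \<Rightarrow> (nat \<Rightarrow> 'b set) \<Rightarrow> (nat \<Rightarrow> 'b) set" where
  "compA k As = PiE {..<k} As"

definition compU :: "nat \<Rightarrow> (nat \<Rightarrow> 's \<Rightarrow> 'b \<Rightarrow> real) \<Rightarrow> 's \<Rightarrow> (nat \<Rightarrow> 'b) \<Rightarrow> real" where
  "compU k us \<theta> as = (\<Sum>l<k. us l \<theta> (as l))"

definition Hset :: "'a set \<Rightarrow> ('s::finite \<Rightarrow> 'a \<Rightarrow> real) \<Rightarrow> (real ^ 's) set" where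
  "Hset A u = {x - z | x z. x \<in> convex hull ((\<lambda>a. \<chi> \<theta>. u \<theta> a) ` A) \<and> (\<forall>\<theta>. 0 \<le> z $ \<theta>)}"

definition equivalent_dp :: "'a set \<Rightarrow> ('s::finite \<Rightarrow> 'a \<Rightarrow> real) \<Rightarrow> 'b set \<Rightarrow> ('s \<Rightarrow> 'b \<Rightarrow> real) \<Rightarrow> bool" where
  "equivalent_dp A u B v \<longleftrightarrow> Hset A u = Hset B v"

definition marginal :: "nat \<Rightarrow> (nat \<Rightarrow> 'b set) \<Rightarrow> ((nat \<Rightarrow> 'b) \<Rightarrow> real) \<Rightarrow> nat \<Rightarrow> 'b \<Rightarrow> real" where
  "marginal k As \<alpha> l b = (\<Sum>as\<in>{as \<in> compA k As. as l = b}. \<alpha> as)"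

end

theory Submission
  imports Defs
begin

text \<open>Identifying a mixed action \<open>\<alpha>\<close> with its utility vector \<open>u(\<alpha>)\<close>, the convex hull in \<open>Hset A u\<close> is
  exactly the set of such vectors, so \<open>Hset A u \<subseteq> Hset B v\<close> means that every mixed action of
  \<open>(A, u)\<close> is weakly dominated, state by state, by one of \<open>(B, v)\<close>. Worst-case payoffs are
  monotone under such pointwise domination, hence equivalent problems have the same robust
  value, and a strategy for \<open>(A, u)\<close> dominating a robustly optimal strategy of the composed
  problem attains it. The expected utility of a composed problem is the sum of the expected
  utilities of the marginals. None of this uses that there are only two states.\<close>

definition eu_vec :: "'a set \<Rightarrow> ('s::finite \<Rightarrow> 'a \<Rightarrow> real) \<Rightarrow> ('a \<Rightarrow> real) \<Rightarrow> real ^ 's" where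
  "eu_vec A u \<alpha> = (\<chi> \<theta>. eu A u \<theta> \<alpha>)"

lemma convex_eu_vecs: "convex {eu_vec S u \<alpha> | \<alpha>. dist_on S \<alpha>}"
  unfolding convex_def
proof (clarify)
  fix \<alpha> \<beta> and p q :: real
  assume "dist_on S \<alpha>" "dist_on S \<beta>" "0 \<le> p" "0 \<le> q" "p + q = 1"
  then have "dist_on S (\<lambda>a. p * \<alpha> a + q * \<beta> a)"
    by (simp add: dist_on_def sum.distrib sum_distrib_left[symmetric])
  moreover have "p *\<^sub>R eu_vec S u \<alpha> + q *\<^sub>R eu_vec S u \<beta> = eu_vec S u (\<lambda>a. p * \<alpha> a + q * \<beta> a)"
    by (simp add: vec_eq_iff eu_vec_def eu_def algebra_simps sum.distrib sum_distrib_left)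
  ultimately show "\<exists>\<gamma>. p *\<^sub>R eu_vec S u \<alpha> + q *\<^sub>R eu_vec S u \<beta> = eu_vec S u \<gamma> \<and> dist_on S \<gamma>"
    by metis
qed

lemma convex_hull_eq_eu_vecs:
  assumes "finite S"
  shows "convex hull ((\<lambda>a. \<chi> \<theta>. u \<theta> a) ` S) = {eu_vec S u \<alpha> | \<alpha>. dist_on S \<alpha>}"
proof
  have "(\<chi> \<theta>. u \<theta> a) = eu_vec S u (\<lambda>b. if b = a then 1 else 0)" if "a \<in> S" for a
    using that assms by (simp add: vec_eq_iff eu_vec_def eu_def if_distrib[of "\<lambda>c. c * _"] cong: if_cong)
  moreover have "dist_on S (\<lambda>b. if b = a then 1 else 0)" if "a \<in> S" for a
    using that assms by (simp add: dist_on_def)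
  ultimately have "(\<lambda>a. \<chi> \<theta>. u \<theta> a) ` S \<subseteq> {eu_vec S u \<alpha> | \<alpha>. dist_on S \<alpha>}"
    by blast
  then show "convex hull ((\<lambda>a. \<chi> \<theta>. u \<theta> a) ` S) \<subseteq> {eu_vec S u \<alpha> | \<alpha>. dist_on S \<alpha>}"
    by (rule hull_minimal) (rule convex_eu_vecs)
next
  show "{eu_vec S u \<alpha> | \<alpha>. dist_on S \<alpha>} \<subseteq> convex hull ((\<lambda>a. \<chi> \<theta>. u \<theta> a) ` S)"
  proof clarify
    fix \<alpha> assume \<alpha>: "dist_on S \<alpha>"
    have "eu_vec S u \<alpha> = (\<Sum>a\<in>S. \<alpha> a *\<^sub>R (\<chi> \<theta>. u \<theta> a))"
      by (simp add: vec_eq_iff sum_component eu_vec_def eu_def)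
    also have "\<dots> \<in> convex hull ((\<lambda>a. \<chi> \<theta>. u \<theta> a) ` S)"
      using \<alpha> by (intro convex_sum[OF assms convex_convex_hull]) (auto simp: dist_on_def intro: hull_inc)
    finally show "eu_vec S u \<alpha> \<in> convex hull ((\<lambda>a. \<chi> \<theta>. u \<theta> a) ` S)" .
  qed
qed

lemma Hset_eq_eu_vecs:
  assumes "finite S"
  shows "Hset S u = {eu_vec S u \<alpha> - z | \<alpha> z. dist_on S \<alpha> \<and> (\<forall>\<theta>. 0 \<le> z $ \<theta>)}"
  unfolding Hset_def convex_hull_eq_eu_vecs[OF assms] by blast

lemma Hset_subset_imp_dominated:
  fixes u :: "'s::finite \<Rightarrow> 'a \<Rightarrow> real" and v :: "'s \<Rightarrow> 'b \<Rightarrow> real"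
  assumes "finite S" "finite T" "Hset S u \<subseteq> Hset T v" "dist_on S \<alpha>"
  shows "\<exists>\<beta>. dist_on T \<beta> \<and> (\<forall>\<theta>. eu S u \<theta> \<alpha> \<le> eu T v \<theta> \<beta>)"
proof -
  have "eu_vec S u \<alpha> - 0 \<in> Hset S u"
    using assms(4) unfolding Hset_eq_eu_vecs[OF assms(1)] by force
  with assms(3) obtain \<beta> z where "dist_on T \<beta>" "\<forall>\<theta>. 0 \<le> z $ \<theta>" "eu_vec S u \<alpha> = eu_vec T v \<beta> - z"
    unfolding Hset_eq_eu_vecs[OF assms(2)] by auto
  then show ?thesis
    by (auto simp: vec_eq_iff eu_vec_def intro!: exI[of _ \<beta>])
qed

lemma eu_compU:
  assumes "\<forall>l<k. finite (As l)"
  shows "eu (compA k As) (compU k us) \<theta> \<alpha> = (\<Sum>l<k. eu (As l) (us l) \<theta> (marginal k As \<alpha> l))"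
proof -
  have fin: "finite (compA k As)"
    unfolding compA_def using assms by (intro finite_PiE) auto
  have "eu (As l) (us l) \<theta> (marginal k As \<alpha> l) = (\<Sum>as\<in>compA k As. \<alpha> as * us l \<theta> (as l))"
    if "l < k" for l
  proof -
    have "eu (As l) (us l) \<theta> (marginal k As \<alpha> l)
        = (\<Sum>b\<in>As l. \<Sum>as\<in>{as \<in> compA k As. as l = b}. \<alpha> as * us l \<theta> (as l))"
      unfolding eu_def marginal_def by (auto simp: sum_distrib_right intro!: sum.cong)
    also have "\<dots> = (\<Sum>as\<in>compA k As. \<alpha> as * us l \<theta> (as l))"
      using assms that by (intro sum.group[OF fin]) (auto simp: compA_def)
    finally show ?thesis .
  qed
  then show ?thesis
    unfolding eu_def compU_def by (simp add: sum_distrib_left sum.swap[of _ "compA k As"])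
qed

lemma payoff_mono:
  assumes "\<forall>\<theta>. \<forall>ys\<in>YY. 0 \<le> Q \<theta> ys"
    and "\<forall>ys\<in>YY. \<forall>\<theta>. eu A u \<theta> (\<sigma> ys) \<le> eu B v \<theta> (\<tau> ys)"
  shows "payoff A u YY Q \<sigma> \<le> payoff B v YY Q \<tau>"
  unfolding payoff_def using assms by (intro sum_mono mult_left_mono) auto

lemma bdd_below_payoff:
  fixes u :: "'s::finite \<Rightarrow> 'a \<Rightarrow> real"
  assumes "finite YY" and "\<forall>Q\<in>\<Q>. \<forall>\<theta>. dist_on YY (Q \<theta>)"
  shows "bdd_below ((\<lambda>Q. payoff A u YY Q \<sigma>) ` \<Q>)"
proof (rule bdd_belowI2)
  fix Q assume Q: "Q \<in> \<Q>"
  have "- \<bar>eu A u \<theta> (\<sigma> ys)\<bar> \<le> Q \<theta> ys * eu A u \<theta> (\<sigma> ys)" if ys: "ys \<in> YY" for \<theta> ys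
  proof -
    have "0 \<le> Q \<theta> ys" using Q assms(2) ys by (auto simp: dist_on_def)
    moreover have "Q \<theta> ys \<le> 1"
      using member_le_sum[OF ys _ assms(1), of "Q \<theta>"] Q assms(2) by (auto simp: dist_on_def)
    ultimately have "\<bar>Q \<theta> ys * eu A u \<theta> (\<sigma> ys)\<bar> \<le> \<bar>eu A u \<theta> (\<sigma> ys)\<bar>"
      by (simp add: abs_mult mult_left_le_one_le)
    then show ?thesis by linarith
  qed
  then have "(\<Sum>\<theta>\<in>UNIV. \<Sum>ys\<in>YY. - \<bar>eu A u \<theta> (\<sigma> ys)\<bar>) \<le> payoff A u YY Q \<sigma>"
    unfolding payoff_def by (intro sum_mono) auto
  then show "- (\<Sum>\<theta>\<in>UNIV. \<Sum>ys\<in>YY. \<bar>eu A u \<theta> (\<sigma> ys)\<bar>) \<le> payoff A u YY Q \<sigma>"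
    by (simp add: sum_negf)
qed

lemma worst_mono:
  fixes u :: "'s::finite \<Rightarrow> 'a \<Rightarrow> real" and v :: "'s \<Rightarrow> 'b \<Rightarrow> real"
  assumes "finite (sigspace m Y)"
    and "\<forall>ys\<in>sigspace m Y. \<forall>\<theta>. eu A u \<theta> (\<sigma> ys) \<le> eu B v \<theta> (\<tau> ys)"
  shows "worst A u m Y P \<sigma> \<le> worst B v m Y P \<tau>"
proof (cases "couplings m Y P = {}")
  case True
  then show ?thesis by (simp add: worst_def)
next
  case False
  have "bdd_below ((\<lambda>Q. payoff A u (sigspace m Y) Q \<sigma>) ` couplings m Y P)"
    using assms(1) by (rule bdd_below_payoff) (simp add: couplings_def)
  moreover have "payoff A u (sigspace m Y) Q \<sigma> \<le> payoff B v (sigspace m Y) Q \<tau>"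
    if "Q \<in> couplings m Y P" for Q
    using that assms(2) by (intro payoff_mono) (auto simp: couplings_def dist_on_def)
  ultimately show ?thesis
    unfolding worst_def using False by (intro cINF_mono) auto
qed

lemma dominating_strategy:
  fixes u :: "'s::finite \<Rightarrow> 'a \<Rightarrow> real" and v :: "'s \<Rightarrow> 'b \<Rightarrow> real"
  assumes "finite S" "finite T" "Hset S u \<subseteq> Hset T v" "strategy S YY \<sigma>"
  shows "\<exists>\<tau>. strategy T YY \<tau> \<and> (\<forall>ys\<in>YY. \<forall>\<theta>. eu S u \<theta> (\<sigma> ys) \<le> eu T v \<theta> (\<tau> ys))"
proof -
  have "\<forall>ys\<in>YY. \<exists>\<beta>. dist_on T \<beta> \<and> (\<forall>\<theta>. eu S u \<theta> (\<sigma> ys) \<le> eu T v \<theta> \<beta>)"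
    using assms Hset_subset_imp_dominated[OF assms(1-3)] by (auto simp: strategy_def)
  then show ?thesis
    unfolding strategy_def by metis
qed

lemma robustly_optimal_if_dominates:
  fixes u :: "'s::finite \<Rightarrow> 'a \<Rightarrow> real" and v :: "'s \<Rightarrow> 'b \<Rightarrow> real"
  assumes "finite A" "finite B" "finite (sigspace m Y)" "Hset A u \<subseteq> Hset B v"
    and opt: "robustly_optimal B v m Y P \<sigma>"
    and \<tau>: "strategy A (sigspace m Y) \<tau>"
    and dom: "\<forall>ys\<in>sigspace m Y. \<forall>\<theta>. eu B v \<theta> (\<sigma> ys) \<le> eu A u \<theta> (\<tau> ys)"
  shows "robustly_optimal A u m Y P \<tau>"
  unfolding robustly_optimal_def
proof (intro conjI allI impI \<tau>)
  fix \<sigma>' assume "strategy A (sigspace m Y) \<sigma>'"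
  then obtain \<rho> where \<rho>: "strategy B (sigspace m Y) \<rho>"
    and \<rho>_dom: "\<forall>ys\<in>sigspace m Y. \<forall>\<theta>. eu A u \<theta> (\<sigma>' ys) \<le> eu B v \<theta> (\<rho> ys)"
    using dominating_strategy[OF assms(1,2,4)] by blast
  have "worst A u m Y P \<sigma>' \<le> worst B v m Y P \<rho>"
    using assms(3) \<rho>_dom by (rule worst_mono)
  also have "\<dots> \<le> worst B v m Y P \<sigma>"
    using opt \<rho> by (simp add: robustly_optimal_def)
  also have "\<dots> \<le> worst A u m Y P \<tau>"
    using assms(3) dom by (rule worst_mono)
  finally show "worst A u m Y P \<sigma>' \<le> worst A u m Y P \<tau>" .
qed

theorem lemma5:
  fixes A :: "'a set" and u :: "'s::finite \<Rightarrow> 'a \<Rightarrow> real"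
    and As :: "nat \<Rightarrow> 'b set" and us :: "nat \<Rightarrow> 's \<Rightarrow> 'b \<Rightarrow> real" and k :: nat
    and Y :: "nat \<Rightarrow> 'y set" and P :: "nat \<Rightarrow> 's \<Rightarrow> 'y \<Rightarrow> real" and m :: nat
    and \<sigma> :: "(nat \<Rightarrow> 'y) \<Rightarrow> (nat \<Rightarrow> 'b) \<Rightarrow> real"
  assumes "CARD('s) = 2"
    and "\<forall>j<m. is_experiment (Y j) (P j)"
    and "finite A" and "A \<noteq> {}"
    and "\<forall>l<k. finite (As l) \<and> As l \<noteq> {}"
    and "equivalent_dp A u (compA k As) (compU k us)"
    and "robustly_optimal (compA k As) (compU k us) m Y P \<sigma>"
  shows "(\<exists>\<sigma>s. strategy A (sigspace m Y) \<sigma>s \<and>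
            (\<forall>ys\<in>sigspace m Y. \<forall>\<theta>.
               eu A u \<theta> (\<sigma>s ys) \<ge> (\<Sum>l<k. eu (As l) (us l) \<theta> (marginal k As (\<sigma> ys) l))))
       \<and> (\<forall>\<sigma>s. strategy A (sigspace m Y) \<sigma>s \<and>
            (\<forall>ys\<in>sigspace m Y. \<forall>\<theta>.
               eu A u \<theta> (\<sigma>s ys) \<ge> (\<Sum>l<k. eu (As l) (us l) \<theta> (marginal k As (\<sigma> ys) l)))
            \<longrightarrow> robustly_optimal A u m Y P \<sigma>s)"
proof -
  let ?A = "compA k As" and ?u = "compU k us" and ?Y = "sigspace m Y"
  have fin_As: "\<forall>l<k. finite (As l)"
    using assms(5) by auto
  have fin_A: "finite ?A"
    unfolding compA_def using fin_As by (intro finite_PiE) auto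
  have fin_Y: "finite ?Y"
    unfolding sigspace_def using assms(2) by (intro finite_PiE) (auto simp: is_experiment_def)
  have H: "Hset ?A ?u \<subseteq> Hset A u" "Hset A u \<subseteq> Hset ?A ?u"
    using assms(6) by (auto simp: equivalent_dp_def)
  have "strategy ?A ?Y \<sigma>"
    using assms(7) by (simp add: robustly_optimal_def)
  then have "\<exists>\<sigma>s. strategy A ?Y \<sigma>s \<and> (\<forall>ys\<in>?Y. \<forall>\<theta>. eu ?A ?u \<theta> (\<sigma> ys) \<le> eu A u \<theta> (\<sigma>s ys))"
    by (rule dominating_strategy[OF fin_A assms(3) H(1)])
  moreover have "robustly_optimal A u m Y P \<sigma>s"
    if "strategy A ?Y \<sigma>s" "\<forall>ys\<in>?Y. \<forall>\<theta>. eu ?A ?u \<theta> (\<sigma> ys) \<le> eu A u \<theta> (\<sigma>s ys)" for \<sigma>s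
    using robustly_optimal_if_dominates[OF assms(3) fin_A fin_Y H(2) assms(7)] that by blast
  ultimately show ?thesis
    by (simp add: eu_compU[OF fin_As])
qed

end
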